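(* There is no injective algebra homomorphism from $\mathbb{C}[[X_1,X_2,\dots]]$ into $\mathbb{C}[[X]]$; in particular, there is no topological (i.e. continuous, injective, homeomorphic-onto-image) algebra embedding of $\mathbb{C}[[X_1,X_2,\dots]]$ into $\mathbb{C}[[X]]$.
   Context: $\mathbb{C}[[X_1,X_2,\dots]]$ denotes the algebra of all formal power series in countably many commuting indeterminates $X_1,X_2,\dots$ with complex coefficients, i.e. formal sums $\sum_{r}\lambda_r X^r$ over finitely supported multi-indices $r=(r_1,r_2,\dots)\in(\mathbb{Z}^+)^{(\mathbb{N})}$, $X^r=\prod_i X_i^{r_i}$. It is a Fréchet algebra under the topology of coordinatewise convergence (defined by the coefficient projections). $\mathbb{C}[[X]]$ is the algebra of formal power series in one indeterminate, with the topology of coordinatewise convergence. *)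

theory Defs
  imports "HOL-Library.Poly_Mapping" "HOL-Computational_Algebra.Formal_Power_Series"
begin

(* Formal power series in countably many indeterminates X_1, X_2, ... with complex
coefficients: arbitrary coefficient functions on finitely supported multi-indices
(nat \<Rightarrow>\<^sub>0 nat). Addition and scalar multiplication are pointwise; multiplication
is the Cauchy product (a finite sum, since each multi-index has finitely many
decompositions r = s + t). *)

type_synonym mps = "(nat \<Rightarrow>\<^sub>0 nat) \<Rightarrow> complex"

definition mps_add :: "mps \<Rightarrow> mps \<Rightarrow> mps" where
  "mps_add f g = (\<lambda>r. f r + g r)"

definition mps_smult :: "complex \<Rightarrow> mps \<Rightarrow> mps" where
  "mps_smult c f = (\<lambda>r. c * f r)"

definition mps_mult :: "mps \<Rightarrow> mps \<Rightarrow> mps" where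
  "mps_mult f g = (\<lambda>r. \<Sum>(s, t) \<in> {(s, t). s + t = r}. f s * g t)"

definition mps_alg_hom :: "(mps \<Rightarrow> complex fps) \<Rightarrow> bool" where
  "mps_alg_hom \<phi> \<longleftrightarrow>
     (\<forall>f g. \<phi> (mps_add f g) = \<phi> f + \<phi> g) \<and>
     (\<forall>c f. \<phi> (mps_smult c f) = fps_const c * \<phi> f) \<and>
     (\<forall>f g. \<phi> (mps_mult f g) = \<phi> f * \<phi> g)"

end

theory Submission
  imports
    Defs
    "HOL-Computational_Algebra.Fundamental_Theorem_Algebra"
    "HOL-Computational_Algebra.Formal_Laurent_Series"
begin

(* An injective homomorphism \<phi> restricts on the variable X_j to an injective endomorphism of
C[[X]], and such an endomorphism is a substitution G \<mapsto> G(a_j) with a_j(0) = 0 and a_j \<noteq> 0.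
In a suitable coordinate a_1 becomes X^p, and C[[X]] is a free C[[X^p]]-module of rank p, so
the p + 1 powers of a_2 satisfy a nontrivial relation \<Sum> G_i(a_1) a_2^i = 0. Then \<phi> kills the
nonzero series \<Sum> G_i(X_1) X_2^i. *)

unbundle fps_syntax

lemma finite_decompositions: "finite {(s, t). s + t = (r :: 'a \<Rightarrow>\<^sub>0 nat)}"
proof -
  let ?D = "{(s, t). s + t = r}" and ?K = "Poly_Mapping.keys r"
  let ?h = "\<lambda>(s, t). restrict (Poly_Mapping.lookup s) ?K"
  have "inj_on ?h ?D"
  proof (rule inj_onI)
    fix x y assume "x \<in> ?D" "y \<in> ?D" and eq: "?h x = ?h y"
    then obtain s t s' t' where x: "x = (s, t)" "s + t = r" and y: "y = (s', t')" "s' + t' = r"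
      by auto
    have "Poly_Mapping.lookup s i = Poly_Mapping.lookup s' i" for i
    proof (cases "i \<in> ?K")
      case True
      then show ?thesis using fun_cong[OF eq, of i] x y by simp
    next
      case False
      then show ?thesis using x y by (metis add_is_0 in_keys_iff lookup_add)
    qed
    then have "s = s'" by (rule poly_mapping_eqI)
    then show "x = y" using x y by (metis add_left_cancel)
  qed
  moreover have "?h ` ?D \<subseteq> PiE ?K (\<lambda>i. {..Poly_Mapping.lookup r i})"
    by (auto simp: lookup_add)
  ultimately show ?thesis
    by (metis (no_types, lifting) finite_PiE finite_atMost finite_imageD finite_keys finite_subset)
qed

lemma add_eq_single_iff:
  fixes s t :: "'a \<Rightarrow>\<^sub>0 nat"
  shows "s + t = Poly_Mapping.single j n \<longleftrightarrow>
     (\<exists>k\<le>n. s = Poly_Mapping.single j k \<and> t = Poly_Mapping.single j (n - k))"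
proof
  assume st: "s + t = Poly_Mapping.single j n"
  then have lk: "Poly_Mapping.lookup s i + Poly_Mapping.lookup t i = (if i = j then n else 0)" for i
    by (metis lookup_add lookup_single_eq lookup_single_not_eq)
  have "Poly_Mapping.lookup s i = 0 \<and> Poly_Mapping.lookup t i = 0" if "i \<noteq> j" for i
    using lk[of i] that by simp
  then have "s = Poly_Mapping.single j (Poly_Mapping.lookup s j)"
    "t = Poly_Mapping.single j (Poly_Mapping.lookup t j)"
    by (auto intro!: poly_mapping_eqI simp: lookup_single when_def)
  then show "\<exists>k\<le>n. s = Poly_Mapping.single j k \<and> t = Poly_Mapping.single j (n - k)"
    using lk[of j] by (metis add_diff_cancel_left' le_add1)
qed (auto simp flip: single_add)

definition mps_of_fps :: "nat \<Rightarrow> complex fps \<Rightarrow> mps" where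
  "mps_of_fps j G =
     (\<lambda>r. if r = Poly_Mapping.single j (Poly_Mapping.lookup r j) then G $ Poly_Mapping.lookup r j else 0)"

lemma mps_of_fps_single [simp]: "mps_of_fps j G (Poly_Mapping.single j n) = G $ n"
  by (simp add: mps_of_fps_def)

lemma mps_of_fps_eq_0:
  "r \<noteq> Poly_Mapping.single j (Poly_Mapping.lookup r j) \<Longrightarrow> mps_of_fps j G r = 0"
  by (simp add: mps_of_fps_def)

lemma mps_of_fps_add: "mps_of_fps j (G + H) = mps_add (mps_of_fps j G) (mps_of_fps j H)"
  by (auto simp: mps_of_fps_def mps_add_def)

lemma mps_of_fps_smult: "mps_of_fps j (fps_const c * G) = mps_smult c (mps_of_fps j G)"
  by (auto simp: mps_of_fps_def mps_smult_def)

lemma inj_mps_of_fps: "inj (mps_of_fps j)"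
proof (rule injI)
  fix G H assume "mps_of_fps j G = mps_of_fps j H"
  then have "mps_of_fps j G (Poly_Mapping.single j n) = mps_of_fps j H (Poly_Mapping.single j n)" for n
    by simp
  then show "G = H" by (simp add: fps_eq_iff)
qed

lemma mps_mult_mps_of_fps: "mps_mult (mps_of_fps j G) (mps_of_fps j H) = mps_of_fps j (G * H)"
proof
  fix r
  let ?f = "\<lambda>(s, t). mps_of_fps j G s * mps_of_fps j H t"
  show "mps_mult (mps_of_fps j G) (mps_of_fps j H) r = mps_of_fps j (G * H) r"
  proof (cases "r = Poly_Mapping.single j (Poly_Mapping.lookup r j)")
    case True
    define n where "n = Poly_Mapping.lookup r j"
    let ?g = "\<lambda>k. (Poly_Mapping.single j k, Poly_Mapping.single j (n - k))"
    have "{(s, t). s + t = r} = ?g ` {..n}"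
      using True by (auto simp: n_def add_eq_single_iff simp flip: single_add)
    moreover have "inj_on ?g {..n}"
      by (rule inj_onI) (metis Pair_inject lookup_single_eq)
    ultimately have "mps_mult (mps_of_fps j G) (mps_of_fps j H) r = (\<Sum>k\<le>n. G $ k * H $ (n - k))"
      by (simp add: mps_mult_def sum.reindex)
    also have "\<dots> = mps_of_fps j (G * H) r"
      using True by (simp add: n_def mps_of_fps_def fps_mult_nth atLeast0AtMost)
    finally show ?thesis .
  next
    case False
    have vanish: "?f x = 0" if mem: "x \<in> {(s, t). s + t = r}" for x
    proof (rule ccontr)
      obtain s t where x: "x = (s, t)" and st: "s + t = r" using mem by auto
      assume "?f x \<noteq> 0"
      with x have "s = Poly_Mapping.single j (Poly_Mapping.lookup s j)"
        "t = Poly_Mapping.single j (Poly_Mapping.lookup t j)"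
        by (auto dest: mps_of_fps_eq_0[of _ j] simp del: lookup_single_eq)
      then show False
        using False st by (metis lookup_add single_add)
    qed
    have "mps_mult (mps_of_fps j G) (mps_of_fps j H) r = 0"
      unfolding mps_mult_def by (intro sum.neutral ballI vanish)
    then show ?thesis
      using False by (simp add: mps_of_fps_eq_0)
  qed
qed

lemma mps_mult_mps_of_fps_monomial:
  assumes "j \<noteq> l"
  shows "mps_mult (mps_of_fps j G) (mps_of_fps l H) (Poly_Mapping.single j k + Poly_Mapping.single l m)
           = G $ k * H $ m"
proof -
  let ?r = "Poly_Mapping.single j k + Poly_Mapping.single l m"
  let ?f = "\<lambda>(s, t). mps_of_fps j G s * mps_of_fps l H t"
  let ?st = "(Poly_Mapping.single j k, Poly_Mapping.single l m)"
  let ?D = "{(s, t). s + t = ?r}"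
  have vanish: "?f x = 0" if mem: "x \<in> ?D - {?st}" for x
  proof (rule ccontr)
    obtain s t where x: "x = (s, t)" and st: "s + t = ?r" "(s, t) \<noteq> ?st" using mem by auto
    assume "?f x \<noteq> 0"
    with x have s: "s = Poly_Mapping.single j (Poly_Mapping.lookup s j)"
      and t: "t = Poly_Mapping.single l (Poly_Mapping.lookup t l)"
      by (auto dest: mps_of_fps_eq_0 simp del: lookup_single_eq)
    have "Poly_Mapping.lookup t j = 0"
      using assms by (subst t) (simp add: lookup_single)
    moreover have "Poly_Mapping.lookup s l = 0"
      using assms by (subst s) (simp add: lookup_single)
    moreover have "Poly_Mapping.lookup (s + t) j = k" "Poly_Mapping.lookup (s + t) l = m"
      using st(1) assms by (simp_all add: lookup_add lookup_single)
    ultimately have "Poly_Mapping.lookup s j = k" "Poly_Mapping.lookup t l = m"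
      by (simp_all add: lookup_add)
    then show False using s t st(2) by simp
  qed
  have "?st \<in> ?D" by simp
  then have "mps_mult (mps_of_fps j G) (mps_of_fps l H) ?r = ?f ?st + (\<Sum>x \<in> ?D - {?st}. ?f x)"
    unfolding mps_mult_def by (rule sum.remove[OF finite_decompositions])
  also have "(\<Sum>x \<in> ?D - {?st}. ?f x) = 0"
    by (intro sum.neutral ballI vanish)
  finally show ?thesis by simp
qed

lemma mps_alg_hom_mult: "mps_alg_hom \<phi> \<Longrightarrow> \<phi> (mps_mult f g) = \<phi> f * \<phi> g"
  by (simp add: mps_alg_hom_def)

lemma mps_alg_hom_zero:
  assumes "mps_alg_hom \<phi>"
  shows "\<phi> (\<lambda>r. 0) = 0"
proof -
  have "mps_add (\<lambda>r. 0) (\<lambda>r. 0) = (\<lambda>r. 0)" by (simp add: mps_add_def)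
  then have "\<phi> (\<lambda>r. 0) = \<phi> (\<lambda>r. 0) + \<phi> (\<lambda>r. 0)"
    using assms unfolding mps_alg_hom_def by metis
  then show ?thesis by simp
qed

lemma mps_alg_hom_sum:
  assumes "mps_alg_hom \<phi>"
  shows "\<phi> (\<lambda>r. \<Sum>i\<in>A. f i r) = (\<Sum>i\<in>A. \<phi> (f i))"
proof (induction A rule: infinite_finite_induct)
  case (insert i A)
  have "(\<lambda>r. \<Sum>i\<in>insert i A. f i r) = mps_add (f i) (\<lambda>r. \<Sum>i\<in>A. f i r)"
    using insert by (simp add: mps_add_def)
  then show ?case using insert assms unfolding mps_alg_hom_def by simp
qed (simp_all add: mps_alg_hom_zero[OF assms])

definition fps_alg_hom :: "('a::field fps \<Rightarrow> 'a fps) \<Rightarrow> bool" where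
  "fps_alg_hom \<chi> \<longleftrightarrow>
     (\<forall>G H. \<chi> (G + H) = \<chi> G + \<chi> H) \<and>
     (\<forall>c G. \<chi> (fps_const c * G) = fps_const c * \<chi> G) \<and>
     (\<forall>G H. \<chi> (G * H) = \<chi> G * \<chi> H) \<and>
     \<chi> 1 = 1"

lemma fps_alg_hom_add: "fps_alg_hom \<chi> \<Longrightarrow> \<chi> (G + H) = \<chi> G + \<chi> H"
  and fps_alg_hom_smult: "fps_alg_hom \<chi> \<Longrightarrow> \<chi> (fps_const c * G) = fps_const c * \<chi> G"
  and fps_alg_hom_mult: "fps_alg_hom \<chi> \<Longrightarrow> \<chi> (G * H) = \<chi> G * \<chi> H"
  and fps_alg_hom_1: "fps_alg_hom \<chi> \<Longrightarrow> \<chi> 1 = 1"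
  unfolding fps_alg_hom_def by blast+

lemma fps_alg_hom_const: "fps_alg_hom \<chi> \<Longrightarrow> \<chi> (fps_const c) = fps_const c"
  using fps_alg_hom_smult[where c = c and G = 1] by (simp add: fps_alg_hom_1)

lemma fps_alg_hom_diff: "fps_alg_hom \<chi> \<Longrightarrow> \<chi> (G - H) = \<chi> G - \<chi> H"
  using fps_alg_hom_add[of \<chi> "G - H" H] by (simp add: algebra_simps)

lemma fps_alg_hom_power: "fps_alg_hom \<chi> \<Longrightarrow> \<chi> (G ^ n) = \<chi> G ^ n"
  by (induction n) (simp_all add: fps_alg_hom_1 fps_alg_hom_mult)

lemma fps_alg_hom_0: "fps_alg_hom \<chi> \<Longrightarrow> \<chi> 0 = 0"
  using fps_alg_hom_const[of \<chi> 0] by simp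

lemma fps_alg_hom_sum: "fps_alg_hom \<chi> \<Longrightarrow> \<chi> (\<Sum>i\<in>A. f i) = (\<Sum>i\<in>A. \<chi> (f i))"
  by (induction A rule: infinite_finite_induct) (simp_all add: fps_alg_hom_0 fps_alg_hom_add)

lemma fps_alg_hom_X_nth_0:
  assumes "fps_alg_hom \<chi>"
  shows "\<chi> fps_X $ 0 = 0"
proof (rule ccontr)
  assume nz: "\<chi> fps_X $ 0 \<noteq> 0"
  \<comment> \<open>\<open>U\<close> is a unit whose image vanishes at the origin\<close>
  define U where "U = 1 - fps_const (1 / \<chi> fps_X $ 0) * fps_X"
  have "inverse U * U = 1"
    by (rule inverse_mult_eq_1) (simp add: U_def)
  then have "\<chi> (inverse U) * \<chi> U = 1"
    using assms by (metis fps_alg_hom_1 fps_alg_hom_mult)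
  moreover have "\<chi> U $ 0 = 0"
    using assms nz by (simp add: U_def fps_alg_hom_diff fps_alg_hom_1 fps_alg_hom_smult)
  ultimately show False
    by (metis fps_mult_nth_0 mult_zero_right one_neq_zero fps_one_nth)
qed

lemma fps_alg_hom_eq_compose:
  assumes hom: "fps_alg_hom \<chi>"
  shows "\<chi> G = G oo \<chi> fps_X"
proof (rule fps_ext)
  fix n
  let ?a = "\<chi> fps_X"
  define P where "P = (\<Sum>k\<le>n. fps_const (G $ k) * fps_X ^ k)"
  define R where "R = G - P"
  have "R $ i = 0" if "i \<le> n" for i
    using that by (simp add: R_def P_def fps_sum_nth mult_delta_right)
  then have R: "R = fps_X ^ Suc n * fps_shift (Suc n) R"
    by (intro fps_ext) (auto simp: fps_X_power_mult_nth simp del: power_Suc)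
  \<comment> \<open>\<open>R\<close> is a multiple of X^(n+1), so its image is a multiple of a^(n+1), which vanishes
    below degree n + 1\<close>
  have "\<chi> R $ n = 0"
  proof -
    have "\<chi> R = ?a ^ Suc n * \<chi> (fps_shift (Suc n) R)"
      by (subst R) (simp add: hom fps_alg_hom_mult fps_alg_hom_power)
    moreover have "(?a ^ Suc n) $ i = 0" if "i \<le> n" for i
      using startsby_zero_power_prefix[OF fps_alg_hom_X_nth_0[OF hom], rule_format, of i "Suc n"] that
      by (simp del: power_Suc)
    ultimately show ?thesis by (simp add: fps_mult_nth)
  qed
  moreover have "\<chi> P = (\<Sum>k\<le>n. fps_const (G $ k) * ?a ^ k)"
    by (simp add: P_def hom fps_alg_hom_sum fps_alg_hom_smult fps_alg_hom_power)
  moreover have "\<chi> G = \<chi> P + \<chi> R"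
    using hom by (simp add: R_def flip: fps_alg_hom_add)
  ultimately have "\<chi> G $ n = (\<Sum>k\<le>n. G $ k * (?a ^ k) $ n)"
    by (simp add: fps_sum_nth)
  also have "\<dots> = (G oo ?a) $ n"
    by (simp add: fps_compose_nth atLeast0AtMost)
  finally show "\<chi> G $ n = (G oo ?a) $ n" .
qed

lemma fps_alg_hom_mps_of_fps:
  assumes hom: "mps_alg_hom \<phi>" and "inj \<phi>"
  shows "fps_alg_hom (\<lambda>G. \<phi> (mps_of_fps j G))" (is "fps_alg_hom ?\<chi>")
proof -
  have add: "?\<chi> (G + H) = ?\<chi> G + ?\<chi> H" for G H
    using hom by (simp add: mps_of_fps_add mps_alg_hom_def)
  have smult: "?\<chi> (fps_const c * G) = fps_const c * ?\<chi> G" for c G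
    using hom by (simp add: mps_of_fps_smult mps_alg_hom_def)
  have mult: "?\<chi> (G * H) = ?\<chi> G * ?\<chi> H" for G H
    using hom by (simp add: mps_mult_mps_of_fps [symmetric] mps_alg_hom_def)
  have "inj ?\<chi>"
    using inj_compose[OF assms(2) inj_mps_of_fps] by (simp add: comp_def)
  moreover have "?\<chi> 0 = 0"
    using smult[of 0 0] by simp
  ultimately have "?\<chi> 1 \<noteq> 0"
    by (metis injD one_neq_zero)
  moreover have "?\<chi> 1 * (?\<chi> 1 - 1) = 0"
    using mult[of 1 1] by (simp add: algebra_simps)
  ultimately have "?\<chi> 1 = 1" by simp
  with add smult mult show ?thesis by (simp add: fps_alg_hom_def)
qed

lemma mps_alg_hom_mps_of_fps_eq_compose:
  assumes "mps_alg_hom \<phi>" and "inj \<phi>"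
  obtains a where "a \<noteq> 0" "a $ 0 = 0" "\<And>G. \<phi> (mps_of_fps j G) = G oo a"
proof
  let ?a = "\<phi> (mps_of_fps j fps_X)"
  note hom = fps_alg_hom_mps_of_fps[OF assms, of j]
  show "?a $ 0 = 0"
    using fps_alg_hom_X_nth_0[OF hom] by simp
  show "\<phi> (mps_of_fps j G) = G oo ?a" for G
    using fps_alg_hom_eq_compose[OF hom, of G] by simp
  have "\<phi> (mps_of_fps j 0) = 0"
    using fps_alg_hom_eq_compose[OF hom, of 0] by simp
  then show "?a \<noteq> 0"
    using assms(2) inj_mps_of_fps by (metis fps_X_neq_zero injD)
qed

lemma fps_root_of_subdegree:
  fixes a :: "'a::{alg_closed_field, field_char_0} fps"
  assumes "a \<noteq> 0" "a $ 0 = 0"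
  obtains s where "s $ 0 = 0" "s $ 1 \<noteq> 0" "s ^ subdegree a = a"
proof -
  define p where "p = subdegree a"
  have "p \<noteq> 0" using assms by (simp add: p_def subdegree_eq_0_iff)
  then obtain k where p: "p = Suc k" by (cases p) auto
  define u where "u = unit_factor a"
  have a: "a = fps_X ^ p * u"
    unfolding u_def p_def by (rule fps_unit_factor_decompose')
  have u0: "u $ 0 \<noteq> 0"
    using assms(1) by (simp add: u_def fps_unit_factor_nth_0)
  obtain \<rho> where \<rho>: "\<rho> ^ Suc k = u $ 0"
    using nth_root_exists[of "Suc k" "u $ 0"] by auto
  define w where "w = fps_radical (\<lambda>_ _. \<rho>) (Suc k) u"
  have "w ^ Suc k = u"
    using power_radical[OF u0, of "\<lambda>_ _. \<rho>" k] \<rho> by (simp add: w_def)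
  then have "(fps_X * w) ^ p = a"
    using a p by (simp add: power_mult_distrib)
  moreover have "\<rho> \<noteq> 0" using \<rho> u0 by auto
  then have "(fps_X * w) $ 1 \<noteq> 0" by (simp add: w_def)
  ultimately show thesis
    using that[of "fps_X * w"] by (simp add: p_def)
qed

(* c = \<Sum>j<p. X^j * (fps_decimate p j c)(X^p): the decomposition of k[[X]] as a free
k[[X^p]]-module *)
definition fps_decimate :: "nat \<Rightarrow> nat \<Rightarrow> 'a::zero fps \<Rightarrow> 'a fps" where
  "fps_decimate p j c = Abs_fps (\<lambda>n. c $ (n * p + j))"

lemma fps_decimate_sum: "fps_decimate p j (\<Sum>i\<in>A. f i) = (\<Sum>i\<in>A. fps_decimate p j (f i))"
  by (rule fps_ext) (simp add: fps_decimate_def fps_sum_nth)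

lemma fps_eq_0_if_decimate_eq_0:
  assumes "0 < p" "\<And>j. j < p \<Longrightarrow> fps_decimate p j c = 0"
  shows "c = 0"
proof (rule fps_ext)
  fix m
  have "c $ m = fps_decimate p (m mod p) c $ (m div p)"
    by (simp add: fps_decimate_def)
  then show "c $ m = 0 $ m" using assms by simp
qed

lemma fps_decimate_compose_X_power_mult:
  fixes G c :: "'a::comm_ring_1 fps"
  assumes p: "0 < p" and j: "j < p"
  shows "fps_decimate p j ((G oo fps_X ^ p) * c) = G * fps_decimate p j c"
proof (rule fps_ext)
  fix n
  let ?f = "\<lambda>m. (G oo fps_X ^ p) $ m * c $ (n * p + j - m)"
  have "(\<lambda>k. k * p) ` {0..n} \<subseteq> {0..n * p + j}"
    by (auto intro!: trans_le_add1 mult_le_mono1)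
  moreover have "?f m = 0" if "m \<in> {0..n * p + j} - (\<lambda>k. k * p) ` {0..n}" for m
  proof (cases "p dvd m")
    case True
    then obtain q where q: "m = q * p" by (metis dvd_def mult.commute)
    have "q * p < Suc n * p" using that q j by auto
    then have "q \<le> n" by (metis less_Suc_eq_le mult_less_cancel2)
    then show ?thesis using that q by auto
  qed (use p in \<open>simp add: fps_nth_compose_X_power\<close>)
  ultimately have "fps_decimate p j ((G oo fps_X ^ p) * c) $ n = (\<Sum>m\<in>(\<lambda>k. k * p) ` {0..n}. ?f m)"
    unfolding fps_decimate_def fps_mult_nth by (simp add: sum.mono_neutral_right)
  also have "\<dots> = (\<Sum>k=0..n. ?f (k * p))"
    using p by (intro sum.reindex_cong[where l = "\<lambda>k. k * p"]) (auto intro!: inj_onI)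
  also have "\<dots> = (\<Sum>k=0..n. G $ k * c $ ((n - k) * p + j))"
    using p by (intro sum.cong) (auto simp: fps_nth_compose_X_power diff_mult_distrib)
  also have "\<dots> = (G * fps_decimate p j c) $ n"
    by (simp add: fps_decimate_def fps_mult_nth)
  finally show "fps_decimate p j ((G oo fps_X ^ p) * c) $ n = (G * fps_decimate p j c) $ n" .
qed

lemma sum_pivot_elimination:
  fixes v :: "'i \<Rightarrow> nat \<Rightarrow> 'a::comm_ring_1"
  assumes "finite I" "k \<in> I"
  shows "(\<Sum>i\<in>I. (if i = k then - (\<Sum>i\<in>I - {k}. c i * v i n) else c i * v k n) * v i j)
           = (\<Sum>i\<in>I - {k}. c i * (v k n * v i j - v i n * v k j))"
proof -
  let ?c = "\<lambda>i. if i = k then - (\<Sum>i\<in>I - {k}. c i * v i n) else c i * v k n"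
  have "(\<Sum>i\<in>I. ?c i * v i j) = ?c k * v k j + (\<Sum>i\<in>I - {k}. ?c i * v i j)"
    using assms by (simp add: sum.remove)
  also have "(\<Sum>i\<in>I - {k}. ?c i * v i j) = (\<Sum>i\<in>I - {k}. c i * v k n * v i j)"
    by (rule sum.cong) auto
  also have "?c k * v k j = - (\<Sum>i\<in>I - {k}. c i * v i n * v k j)"
    by (simp add: sum_distrib_right)
  finally show ?thesis
    by (simp add: algebra_simps sum_subtractf)
qed

lemma exists_nontrivial_linear_relation:
  fixes v :: "'i \<Rightarrow> nat \<Rightarrow> 'a::idom"
  assumes "finite I" "n < card I"
  shows "\<exists>c. (\<exists>i\<in>I. c i \<noteq> 0) \<and> (\<forall>j<n. (\<Sum>i\<in>I. c i * v i j) = 0)"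
  using assms
proof (induction n arbitrary: I v)
  case 0
  then have "I \<noteq> {}" by auto
  then show ?case
    by (intro exI[of _ "\<lambda>_. 1"]) auto
next
  case (Suc n)
  show ?case
  proof (cases "\<forall>i\<in>I. v i n = 0")
    case True
    obtain c where c: "\<exists>i\<in>I. c i \<noteq> 0" and rel: "\<forall>j<n. (\<Sum>i\<in>I. c i * v i j) = 0"
      using Suc.IH[of I v] Suc.prems by auto
    have "\<forall>j<Suc n. (\<Sum>i\<in>I. c i * v i j) = 0"
      using rel True by (simp add: less_Suc_eq)
    with c show ?thesis by blast
  next
    case False
    then obtain k where k: "k \<in> I" "v k n \<noteq> 0" by auto
    have "n < card (I - {k})"
      using Suc.prems k by simp
    \<comment> \<open>eliminate the \<open>n\<close>-th coordinate with the pivot \<open>v k n\<close>\<close>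
    then obtain c where c: "\<exists>i\<in>I - {k}. c i \<noteq> 0"
      and rel: "\<forall>j<n. (\<Sum>i\<in>I - {k}. c i * (v k n * v i j - v i n * v k j)) = 0"
      using Suc.IH[of "I - {k}" "\<lambda>i j. v k n * v i j - v i n * v k j"] Suc.prems(1) by blast
    let ?c = "\<lambda>i. if i = k then - (\<Sum>i\<in>I - {k}. c i * v i n) else c i * v k n"
    have "\<forall>j<Suc n. (\<Sum>i\<in>I. ?c i * v i j) = 0"
    proof (intro allI impI)
      fix j assume "j < Suc n"
      have "(\<Sum>i\<in>I. ?c i * v i j) = (\<Sum>i\<in>I - {k}. c i * (v k n * v i j - v i n * v k j))"
        by (rule sum_pivot_elimination[OF Suc.prems(1) k(1)])
      also have "\<dots> = 0"
        using \<open>j < Suc n\<close> rel by (cases "j = n") (simp_all add: mult.commute)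
      finally show "(\<Sum>i\<in>I. ?c i * v i j) = 0" .
    qed
    moreover have "\<exists>i\<in>I. ?c i \<noteq> 0"
      using c k by auto
    ultimately show ?thesis
      by (intro exI[of _ ?c]) blast
  qed
qed

lemma fps_powers_dependent_over_compose_X_power:
  fixes b :: "'a::idom fps"
  assumes p: "0 < p"
  obtains G where "\<exists>i\<le>p. G i \<noteq> 0" "(\<Sum>i\<le>p. (G i oo fps_X ^ p) * b ^ i) = 0"
proof -
  obtain G where G: "\<exists>i\<le>p. G i \<noteq> 0"
    and rel: "\<And>j. j < p \<Longrightarrow> (\<Sum>i\<le>p. G i * fps_decimate p j (b ^ i)) = 0"
    using exists_nontrivial_linear_relation[of "{..p}" p "\<lambda>i j. fps_decimate p j (b ^ i)"] by auto
  have "fps_decimate p j (\<Sum>i\<le>p. (G i oo fps_X ^ p) * b ^ i) = 0" if "j < p" for j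
    using rel[OF that] p that by (simp add: fps_decimate_sum fps_decimate_compose_X_power_mult)
  with G p show thesis
    using that fps_eq_0_if_decimate_eq_0 by blast
qed

lemma fps_powers_dependent_over_compose:
  fixes a b :: "'a::{alg_closed_field, field_char_0} fps"
  assumes "a \<noteq> 0" "a $ 0 = 0"
  obtains n G where "\<exists>i\<le>n. G i \<noteq> 0" "(\<Sum>i\<le>n. (G i oo a) * b ^ i) = 0"
proof -
  define p where "p = subdegree a"
  have p: "0 < p"
    using assms by (metis gr0I p_def subdegree_eq_0_iff)
  obtain s where s0: "s $ 0 = 0" and s1: "s $ 1 \<noteq> 0" and s: "s ^ p = a"
    using fps_root_of_subdegree[OF assms] unfolding p_def .
  define S where "S = fps_inv s"
  have S0: "S $ 0 = 0" by (simp add: S_def fps_inv_def)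
  have "S oo s = fps_X"
    using fps_inv[OF s0 s1] by (simp add: S_def)
  then have b: "(b oo S) oo s = b"
    using fps_compose_assoc[OF s0 S0, of b] by simp
  obtain G where G: "\<exists>i\<le>p. G i \<noteq> 0"
    and rel: "(\<Sum>i\<le>p. (G i oo fps_X ^ p) * (b oo S) ^ i) = 0"
    using fps_powers_dependent_over_compose_X_power[OF p] by blast
  \<comment> \<open>substituting \<open>s\<close> turns X^p into \<open>a\<close> and \<open>b \<circ> S\<close> back into \<open>b\<close>\<close>
  have summand: "((G i oo fps_X ^ p) * (b oo S) ^ i) oo s = (G i oo a) * b ^ i" for i
  proof -
    have "(G i oo fps_X ^ p) oo s = G i oo a"
      using fps_compose_assoc[OF s0, of "fps_X ^ p" "G i"] p
      by (simp add: fps_X_power_compose[OF s0] s)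
    moreover have "(b oo S) ^ i oo s = b ^ i"
      by (simp add: fps_compose_power[OF s0, symmetric] b)
    ultimately show ?thesis
      by (simp add: fps_compose_mult_distrib[OF s0])
  qed
  have "(\<Sum>i\<le>p. (G i oo a) * b ^ i) = (\<Sum>i\<le>p. (G i oo fps_X ^ p) * (b oo S) ^ i) oo s"
    by (simp add: fps_compose_sum_distrib summand)
  then show thesis
    using that G rel by simp
qed

theorem theorem1p1:
  shows "\<not> (\<exists>\<phi> :: mps \<Rightarrow> complex fps. mps_alg_hom \<phi> \<and> inj \<phi>)"
proof
  assume "\<exists>\<phi> :: mps \<Rightarrow> complex fps. mps_alg_hom \<phi> \<and> inj \<phi>"
  then obtain \<phi> :: "mps \<Rightarrow> complex fps" where hom: "mps_alg_hom \<phi>" and inj: "inj \<phi>"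
    by blast
  obtain a where a: "a \<noteq> 0" "a $ 0 = 0" and \<phi>_a: "\<And>G. \<phi> (mps_of_fps 1 G) = G oo a"
    using mps_alg_hom_mps_of_fps_eq_compose[OF hom inj, where j = 1] by blast
  obtain b where b: "b $ 0 = 0" and \<phi>_b: "\<And>G. \<phi> (mps_of_fps 2 G) = G oo b"
    using mps_alg_hom_mps_of_fps_eq_compose[OF hom inj, where j = 2] by blast
  obtain n G where G: "\<exists>i\<le>n. G i \<noteq> 0" and rel: "(\<Sum>i\<le>n. (G i oo a) * b ^ i) = 0"
    using fps_powers_dependent_over_compose[OF a] .
  define F where "F = (\<lambda>r. \<Sum>i\<le>n. mps_mult (mps_of_fps 1 (G i)) (mps_of_fps 2 (fps_X ^ i)) r)"
  have "\<phi> F = (\<Sum>i\<le>n. (G i oo a) * (fps_X ^ i oo b))"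
    unfolding F_def mps_alg_hom_sum[OF hom] mps_alg_hom_mult[OF hom] \<phi>_a \<phi>_b ..
  also have "\<dots> = \<phi> (\<lambda>r. 0)"
    using rel by (simp add: fps_X_power_compose[OF b] mps_alg_hom_zero[OF hom])
  finally have "F = (\<lambda>r. 0)"
    by (rule injD[OF inj])
  moreover obtain i where "i \<le> n" "G i \<noteq> 0"
    using G by blast
  then have "F (Poly_Mapping.single 1 (subdegree (G i)) + Poly_Mapping.single 2 i) \<noteq> 0"
    by (simp add: F_def mps_mult_mps_of_fps_monomial mult_delta_right)
  ultimately show False
    by simp
qed

end
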